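(* A topological space $X$ is $K^\theta$-compact if and only if it is w-compact.
   Context: $\mathsf{Top}$ is the category of topological spaces and continuous maps; $\mathsf{Tych}$ its full subcategory of Tychonoff spaces. For a space $X$, let $\mathbb I=[0,1]$, $\Phi_X:X\to\mathbb I^{C(X,\mathbb I)}$, $x\mapsto(f(x))_f$, and $\tau X=\Phi_X(X)$ (subspace topology); $\theta_X:X\to\tau X$ is the induced surjection, which is the reflection of $X$ into $\mathsf{Tych}$ (Tychonoff functor). Subobjects of a space are its subsets with the subspace topology. The closure operator $K^\theta$ on $\mathsf{Top}$ is defined by $K^\theta_X(S)=\theta_X^{-1}\big(\overline{\theta_X(S)}\big)$ for $S\subseteq X$, where the bar denotes topological closure in $\tau X$. A space $X$ is $K^\theta$-compact if for every space $Y$ and every subset $S\subseteq X\times Y$, $\pi_Y(K^\theta_{X\times Y}(S))=K^\theta_Y(\pi_Y(S))$, where $\pi_Y:X\times Y\to Y$ is the projection. A cozero-set of $X$ is a set $\{x: g(x)>0\}$ for some continuous $g:X\to\mathbb I$; a zero-set is $\{x: f(x)=0\}$ for continuous $f:X\to\mathbb I$. A subset is $\tau$-open if it is a union of cozero-sets. $X$ is w-compact (Ishii) if for every family $\{P_\lambda\}$ of $\tau$-open subsets of $X$ with the finite intersection property, $\bigcap_\lambda\overline{P_\lambda}\ne\emptyset$ (closures in $X$). *)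

theory Defs
  imports "HOL-Analysis.Analysis"
begin

definition unit_interval :: "real topology" where
  "unit_interval = top_of_set {0..1}"

definition CI :: "'a topology \<Rightarrow> ('a \<Rightarrow> real) set" where
  "CI X = {f. continuous_map X unit_interval f}"

text \<open>The evaluation map Phi_X : X -> I^(C(X,I)), x |-> (f x)_f, i.e. theta_X onto its image.\<close>
definition Phi :: "'a topology \<Rightarrow> 'a \<Rightarrow> (('a \<Rightarrow> real) \<Rightarrow> real)" where
  "Phi X x = (\<lambda>f\<in>CI X. f x)"

definition tauX :: "'a topology \<Rightarrow> (('a \<Rightarrow> real) \<Rightarrow> real) topology" where
  "tauX X = subtopology (product_topology (\<lambda>_. unit_interval) (CI X)) (Phi X ` topspace X)"

definition Ktheta :: "'a topology \<Rightarrow> 'a set \<Rightarrow> 'a set" where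
  "Ktheta X S = {x \<in> topspace X. Phi X x \<in> (tauX X) closure_of (Phi X ` S)}"

text \<open>K^theta-compactness, with the test spaces Y ranging over topologies on the type 'b
  (indicated by the type argument).\<close>
definition Ktheta_compact :: "'a topology \<Rightarrow> 'b itself \<Rightarrow> bool" where
  "Ktheta_compact X T \<longleftrightarrow>
     (\<forall>(Y::'b topology) S. S \<subseteq> topspace (prod_topology X Y) \<longrightarrow>
        snd ` (Ktheta (prod_topology X Y) S) = Ktheta Y (snd ` S))"

definition cozero_set :: "'a topology \<Rightarrow> 'a set \<Rightarrow> bool" where
  "cozero_set X C \<longleftrightarrow>
     (\<exists>g. continuous_map X unit_interval g \<and> C = {x \<in> topspace X. g x > 0})"

definition tau_open :: "'a topology \<Rightarrow> 'a set \<Rightarrow> bool" where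
  "tau_open X P \<longleftrightarrow> (\<exists>\<C>. (\<forall>C\<in>\<C>. cozero_set X C) \<and> P = \<Union>\<C>)"

definition finite_intersection_property :: "'a set set \<Rightarrow> bool" where
  "finite_intersection_property \<F> \<longleftrightarrow>
     (\<forall>\<G>. \<G> \<subseteq> \<F> \<and> finite \<G> \<and> \<G> \<noteq> {} \<longrightarrow> \<Inter>\<G> \<noteq> {})"

text \<open>w-compactness (Ishii); families are nonempty (indexed by some lambda).\<close>
definition w_compact :: "'a topology \<Rightarrow> bool" where
  "w_compact X \<longleftrightarrow>
     (\<forall>\<F>. \<F> \<noteq> {} \<and> (\<forall>P\<in>\<F>. tau_open X P) \<and> finite_intersection_property \<F> \<longrightarrow>
        (\<Inter>P\<in>\<F>. X closure_of P) \<noteq> {})"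

end

theory Submission
  imports Defs
begin

text \<open>
  A point x lies in K^\<theta>(S) iff every continuous f : X \<rightarrow> [0,1] that is positive at x is
  positive somewhere on S: the cozero sets form a neighbourhood base of the topology that
  \<theta>_X pulls back from \<tau>X.

  If X is w-compact, every continuous g on X \<times> Y is equicontinuous in the X-variable: otherwise
  the \<tau>-open sets {u. \<exists>y\<in>B. \<bar>g(u,y) - g(u,y1)\<bar> > e/2}, B ranging over the neighbourhoods
  of y1, have the finite intersection property, hence a common adherent point, at which g is
  discontinuous. So
  y \<mapsto> sup_u \<bar>g(u,y) - g(u,y0)\<bar> is continuous, which yields a tube lemma for cozero
  neighbourhoods, and the usual tube-lemma argument shows that the projection X \<times> Y \<rightarrow> Y maps
  K^\<theta>-closures onto K^\<theta>-closures.

  Conversely, let F be a family of \<tau>-open sets with the finite intersection property and no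
  common adherent point. Take for Y the point None together with the pairs Z \<subseteq> C separated by
  a continuous function into [0,1]; the pairs are isolated and None is adherent to
  the pairs whose C lies in a finite intersection of members of F. For
  S = {(z, (Z, C)) | z \<in> Z} the finite intersection property puts None into K^\<theta>(\<pi>_Y S), while
  the function that is 1 near X \<times> {None} and separates Z from the complement of C at (Z, C)
  keeps every (x, None) out of K^\<theta>(S).
\<close>

lemma CI_iff:
  "f \<in> CI X \<longleftrightarrow> continuous_map X euclideanreal f \<and> (\<forall>x\<in>topspace X. 0 \<le> f x \<and> f x \<le> 1)"
  unfolding CI_def unit_interval_def
  by (auto simp: continuous_map_in_subtopology image_subset_iff)

lemma continuous_map_CI: "f \<in> CI X \<Longrightarrow> continuous_map X euclideanreal f"
  by (simp add: CI_iff)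

lemma CI_bounds: "f \<in> CI X \<Longrightarrow> x \<in> topspace X \<Longrightarrow> 0 \<le> f x \<and> f x \<le> 1"
  by (simp add: CI_iff)

lemma CI_truncate:
  assumes "continuous_map X euclideanreal g"
  shows "(\<lambda>x. min 1 (max 0 (g x))) \<in> CI X"
  unfolding CI_iff using assms by (auto intro!: continuous_map_real_min continuous_map_real_max)

lemma CI_const: "0 \<le> c \<Longrightarrow> c \<le> 1 \<Longrightarrow> (\<lambda>_. c) \<in> CI X"
  by (simp add: CI_iff)

lemma CI_mult: "f \<in> CI X \<Longrightarrow> g \<in> CI X \<Longrightarrow> (\<lambda>x. f x * g x) \<in> CI X"
  by (auto simp: CI_iff intro!: continuous_map_real_mult mult_le_one)

lemma CI_compose_snd: "g \<in> CI Y \<Longrightarrow> (\<lambda>p. g (snd p)) \<in> CI (prod_topology X Y)"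
  unfolding CI_iff by (auto intro: continuous_map_compose[OF continuous_map_snd, unfolded o_def])

lemma continuous_map_real_localI:
  assumes "\<And>x e. x \<in> topspace X \<Longrightarrow> e > 0 \<Longrightarrow>
            \<exists>U. openin X U \<and> x \<in> U \<and> (\<forall>y\<in>U. \<bar>f y - f x\<bar> < e)"
  shows "continuous_map X euclideanreal f"
  unfolding continuous_map_atin limitin_canonical_iff tendsto_iff eventually_atin dist_real_def
  using assms by fast

lemma continuous_map_section:
  "continuous_map (prod_topology X Y) euclideanreal g \<Longrightarrow> y \<in> topspace Y
   \<Longrightarrow> continuous_map X euclideanreal (\<lambda>u. g (u, y))"
  using continuous_map_compose[of X "prod_topology X Y" "\<lambda>u. (u, y)"]
  by (simp add: continuous_map_pairedI o_def)

lemma continuous_map_prod_box: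
  assumes g: "continuous_map (prod_topology X Y) euclideanreal g"
    and x: "x \<in> topspace X" and y1: "y1 \<in> topspace Y" and e: "e > 0"
  obtains A B where "openin X A" "openin Y B" "x \<in> A" "y1 \<in> B"
    "\<And>u y. u \<in> A \<Longrightarrow> y \<in> B \<Longrightarrow> \<bar>g (u, y) - g (u, y1)\<bar> < e"
proof -
  let ?k = "\<lambda>p. \<bar>g p - g (fst p, y1)\<bar>"
  have "continuous_map (prod_topology X Y) (prod_topology X Y) (\<lambda>p. (fst p, y1))"
    using y1 by (intro continuous_map_pairedI continuous_map_fst) simp_all
  then have "continuous_map (prod_topology X Y) euclideanreal (\<lambda>p. g (fst p, y1))"
    using continuous_map_compose[OF _ g] by (simp add: o_def)
  then have "continuous_map (prod_topology X Y) euclideanreal ?k"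
    using g by (intro continuous_map_real_abs continuous_map_diff)
  then have "openin (prod_topology X Y) {p \<in> topspace (prod_topology X Y). ?k p \<in> {..<e}}"
    by (rule openin_continuous_map_preimage) simp
  moreover have "(x, y1) \<in> {p \<in> topspace (prod_topology X Y). ?k p \<in> {..<e}}"
    using x y1 e by simp
  ultimately obtain A B where AB: "openin X A" "openin Y B" "x \<in> A" "y1 \<in> B"
      "A \<times> B \<subseteq> {p \<in> topspace (prod_topology X Y). ?k p \<in> {..<e}}"
    unfolding openin_prod_topology_alt by meson
  moreover have "\<bar>g (u, y) - g (u, y1)\<bar> < e" if "u \<in> A" "y \<in> B" for u y
    using AB(5) that by auto
  ultimately show thesis
    using that by blast
qed

section \<open>Cozero neighbourhoods and \<tau>-open sets\<close>

definition cozero_nbhd :: "'a topology \<Rightarrow> 'a \<Rightarrow> 'a set \<Rightarrow> bool" where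
  "cozero_nbhd X x P \<longleftrightarrow> (\<exists>h\<in>CI X. 0 < h x \<and> (\<forall>u\<in>topspace X. 0 < h u \<longrightarrow> u \<in> P))"

lemma cozero_nbhdI:
  "h \<in> CI X \<Longrightarrow> 0 < h x \<Longrightarrow> (\<And>u. u \<in> topspace X \<Longrightarrow> 0 < h u \<Longrightarrow> u \<in> P) \<Longrightarrow> cozero_nbhd X x P"
  unfolding cozero_nbhd_def by blast

lemma cozero_nbhdE:
  assumes "cozero_nbhd X x P"
  obtains h where "h \<in> CI X" "0 < h x" "\<And>u. u \<in> topspace X \<Longrightarrow> 0 < h u \<Longrightarrow> u \<in> P"
  using assms unfolding cozero_nbhd_def by blast

lemma cozero_nbhd_mono: "cozero_nbhd X x P \<Longrightarrow> P \<inter> topspace X \<subseteq> Q \<Longrightarrow> cozero_nbhd X x Q"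
  unfolding cozero_nbhd_def by blast

lemma cozero_nbhd_Int:
  assumes "cozero_nbhd X x P" "cozero_nbhd X x Q"
  shows "cozero_nbhd X x (P \<inter> Q)"
proof -
  obtain f where f: "f \<in> CI X" "0 < f x" "\<And>u. u \<in> topspace X \<Longrightarrow> 0 < f u \<Longrightarrow> u \<in> P"
    using cozero_nbhdE[OF assms(1)] by metis
  obtain g where g: "g \<in> CI X" "0 < g x" "\<And>u. u \<in> topspace X \<Longrightarrow> 0 < g u \<Longrightarrow> u \<in> Q"
    using cozero_nbhdE[OF assms(2)] by metis
  have "u \<in> P \<inter> Q" if u: "u \<in> topspace X" and fg: "0 < f u * g u" for u
  proof -
    have "0 \<le> f u" "0 \<le> g u" using CI_bounds[OF f(1) u] CI_bounds[OF g(1) u] by auto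
    then have "0 < f u" "0 < g u" using fg by (auto simp: zero_less_mult_iff)
    then show ?thesis using f(3)[OF u] g(3)[OF u] by blast
  qed
  moreover have "0 < f x * g x" using f(2) g(2) by simp
  ultimately show ?thesis
    using CI_mult[OF f(1) g(1)] by (intro cozero_nbhdI)
qed

lemma cozero_nbhd_Inter:
  assumes "finite \<G>" "\<And>P. P \<in> \<G> \<Longrightarrow> cozero_nbhd X x P"
  shows "cozero_nbhd X x (\<Inter>\<G>)"
  using assms
proof (induction rule: finite_induct)
  case empty
  have "(\<lambda>_. 1) \<in> CI X" by (simp add: CI_const)
  then show ?case by (rule cozero_nbhdI) auto
next
  case (insert P \<G>)
  then show ?case by (simp add: cozero_nbhd_Int)
qed

lemma cozero_nbhd_preimage:
  assumes f: "continuous_map X euclideanreal f" and "open V" "f x \<in> V"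
  shows "cozero_nbhd X x {u \<in> topspace X. f u \<in> V}"
proof -
  obtain e where e: "e > 0" "ball (f x) e \<subseteq> V"
    using assms openE by blast
  let ?h = "\<lambda>u. min 1 (max 0 (e - \<bar>f u - f x\<bar>))"
  have "?h \<in> CI X"
    using f by (intro CI_truncate continuous_map_diff continuous_map_real_abs) auto
  moreover have "f u \<in> V" if "0 < ?h u" for u
    using that e(2) by (auto simp: dist_real_def)
  ultimately show ?thesis
    using e(1) by (intro cozero_nbhdI[of ?h]) auto
qed

lemma tau_open_iff: "tau_open X P \<longleftrightarrow> P \<subseteq> topspace X \<and> (\<forall>x\<in>P. cozero_nbhd X x P)"
proof
  assume "tau_open X P"
  then obtain \<C> where \<C>: "\<forall>C\<in>\<C>. cozero_set X C" "P = \<Union>\<C>"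
    unfolding tau_open_def by auto
  have "x \<in> topspace X \<and> cozero_nbhd X x P" if "C \<in> \<C>" "x \<in> C" for C x
  proof -
    have "cozero_set X C" using \<C>(1) that(1) by simp
    then obtain g where g: "g \<in> CI X" "C = {u \<in> topspace X. 0 < g u}"
      unfolding cozero_set_def CI_def by auto
    then have "cozero_nbhd X x P"
      using that \<C>(2) by (intro cozero_nbhdI[of g]) auto
    then show ?thesis
      using g(2) that(2) by simp
  qed
  then show "P \<subseteq> topspace X \<and> (\<forall>x\<in>P. cozero_nbhd X x P)"
    using \<C>(2) by auto
next
  assume P: "P \<subseteq> topspace X \<and> (\<forall>x\<in>P. cozero_nbhd X x P)"
  let ?\<C> = "{C. cozero_set X C \<and> C \<subseteq> P}"
  have "x \<in> \<Union>?\<C>" if x: "x \<in> P" for x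
  proof -
    have "cozero_nbhd X x P" using P x by simp
    then obtain h where h: "h \<in> CI X" "0 < h x" "\<And>u. u \<in> topspace X \<Longrightarrow> 0 < h u \<Longrightarrow> u \<in> P"
      using cozero_nbhdE by metis
    then have "{u \<in> topspace X. 0 < h u} \<in> ?\<C>"
      unfolding cozero_set_def CI_def by auto
    then show ?thesis
      using h(2) P x by auto
  qed
  then have "P = \<Union>?\<C>" by auto
  then show "tau_open X P"
    unfolding tau_open_def by (intro exI[of _ ?\<C>]) simp
qed

lemma tau_open_preimage:
  assumes "continuous_map X euclideanreal f" "open V"
  shows "tau_open X {u \<in> topspace X. f u \<in> V}"
  unfolding tau_open_iff using cozero_nbhd_preimage[OF assms] by auto

lemma tau_open_UN:
  assumes "\<And>i. i \<in> I \<Longrightarrow> tau_open X (P i)"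
  shows "tau_open X (\<Union>i\<in>I. P i)"
  unfolding tau_open_iff
proof (intro conjI ballI)
  show "(\<Union>i\<in>I. P i) \<subseteq> topspace X"
    using assms by (auto simp: tau_open_iff)
  fix x assume "x \<in> (\<Union>i\<in>I. P i)"
  then obtain i where "i \<in> I" "x \<in> P i"
    by blast
  then have "cozero_nbhd X x (P i)"
    using assms by (simp add: tau_open_iff)
  then show "cozero_nbhd X x (\<Union>i\<in>I. P i)"
    by (rule cozero_nbhd_mono) (use \<open>i \<in> I\<close> in blast)
qed

lemma notin_closure_of_sublevel:
  assumes "continuous_map X euclideanreal f" "c < f x"
  shows "x \<notin> X closure_of {u \<in> topspace X. f u < c}"
proof -
  have "closedin X {u \<in> topspace X. f u \<in> {..c}}"
    by (rule closedin_continuous_map_preimage[OF assms(1)]) simp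
  then have "X closure_of {u \<in> topspace X. f u < c} \<subseteq> {u \<in> topspace X. f u \<in> {..c}}"
    by (intro closure_of_minimal) auto
  then show ?thesis
    using assms(2) by auto
qed

section \<open>The closure operator K^\<theta>\<close>

lemma Phi_apply: "g \<in> CI X \<Longrightarrow> Phi X x g = g x"
  by (simp add: Phi_def)

lemma topspace_unit_interval: "topspace unit_interval = {0..1}"
  by (simp add: unit_interval_def)

lemma Phi_in_topspace:
  "x \<in> topspace X \<Longrightarrow> Phi X x \<in> topspace (product_topology (\<lambda>_. unit_interval) (CI X))"
  by (auto simp: Phi_def topspace_unit_interval CI_iff PiE_iff)

lemma cozero_nbhd_Phi_preimage:
  assumes T: "openin (product_topology (\<lambda>_. unit_interval) (CI X)) T"
    and x: "x \<in> topspace X" "Phi X x \<in> T"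
  shows "cozero_nbhd X x {u \<in> topspace X. Phi X u \<in> T}"
proof -
  obtain U where U: "finite {i \<in> CI X. U i \<noteq> topspace unit_interval}"
      "\<forall>i\<in>CI X. openin unit_interval (U i)" "Phi X x \<in> Pi\<^sub>E (CI X) U" "Pi\<^sub>E (CI X) U \<subseteq> T"
    using T x(2) unfolding openin_product_topology_alt by blast
  define K where "K = {i \<in> CI X. U i \<noteq> {0..1}}"
  have "cozero_nbhd X x {u \<in> topspace X. i u \<in> U i}" if i: "i \<in> CI X" for i
  proof -
    obtain V where V: "open V" "U i = {0..1} \<inter> V"
      using U(2) i unfolding unit_interval_def openin_open by auto
    have "i x \<in> U i"
      using U(3) i by (auto simp: PiE_iff Phi_apply)
    then have "i x \<in> V"
      using V(2) by blast
    moreover have "{u \<in> topspace X. i u \<in> U i} = {u \<in> topspace X. i u \<in> V}"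
      using CI_bounds[OF i] V(2) by auto
    ultimately show ?thesis
      using cozero_nbhd_preimage[OF continuous_map_CI[OF i] V(1)] by simp
  qed
  then have "cozero_nbhd X x (\<Inter>i\<in>K. {u \<in> topspace X. i u \<in> U i})"
    using U(1) by (intro cozero_nbhd_Inter) (auto simp: K_def topspace_unit_interval)
  moreover have "Phi X u \<in> T" if u: "u \<in> topspace X" "\<forall>i\<in>K. i u \<in> U i" for u
  proof -
    have "i u \<in> U i" if i: "i \<in> CI X" for i
      using u CI_bounds[OF i u(1)] i by (cases "i \<in> K") (auto simp: K_def topspace_unit_interval)
    then have "Phi X u \<in> Pi\<^sub>E (CI X) U"
      by (simp add: Phi_def)
    then show ?thesis
      using U(4) by blast
  qed
  then have "(\<Inter>i\<in>K. {u \<in> topspace X. i u \<in> U i}) \<inter> topspace X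
      \<subseteq> {u \<in> topspace X. Phi X u \<in> T}"
    by auto
  ultimately show ?thesis
    by (rule cozero_nbhd_mono)
qed

lemma Ktheta_cozero:
  assumes x: "x \<in> Ktheta X S" and g: "g \<in> CI X" "0 < g x"
  shows "\<exists>s\<in>S. 0 < g s"
proof -
  let ?P = "product_topology (\<lambda>_. unit_interval) (CI X)"
  let ?U = "{p \<in> topspace ?P. p g \<in> {0<..}} \<inter> Phi X ` topspace X"
  have xt: "x \<in> topspace X" and cl: "Phi X x \<in> tauX X closure_of (Phi X ` S)"
    using x by (simp_all add: Ktheta_def)
  have "continuous_map ?P euclideanreal (\<lambda>p. p g)"
    using continuous_map_product_projection[OF g(1), of "\<lambda>_. unit_interval"]
    unfolding unit_interval_def by (simp add: continuous_map_in_subtopology)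
  then have "openin ?P {p \<in> topspace ?P. p g \<in> {0<..}}"
    by (rule openin_continuous_map_preimage) simp
  then have U: "openin (tauX X) ?U"
    unfolding tauX_def openin_subtopology by blast
  have x_U: "Phi X x \<in> ?U"
    using Phi_in_topspace[OF xt] xt g by (simp add: Phi_apply)
  have "\<forall>T. Phi X x \<in> T \<and> openin (tauX X) T \<longrightarrow> (\<exists>y. y \<in> Phi X ` S \<and> y \<in> T)"
    using cl unfolding in_closure_of by (rule conjunct2)
  from this[rule_format, OF conjI[OF x_U U]]
  obtain s where "s \<in> S" "0 < Phi X s g"
    by auto
  then show ?thesis
    using g(1) by (auto simp: Phi_apply)
qed

lemma Ktheta_iff:
  assumes S: "S \<subseteq> topspace X"
  shows "x \<in> Ktheta X S \<longleftrightarrow> x \<in> topspace X \<and> (\<forall>g\<in>CI X. 0 < g x \<longrightarrow> (\<exists>s\<in>S. 0 < g s))"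
proof
  assume x: "x \<in> Ktheta X S"
  then have "x \<in> topspace X"
    by (simp add: Ktheta_def)
  then show "x \<in> topspace X \<and> (\<forall>g\<in>CI X. 0 < g x \<longrightarrow> (\<exists>s\<in>S. 0 < g s))"
    using Ktheta_cozero[OF x] by blast
next
  let ?P = "product_topology (\<lambda>_. unit_interval) (CI X)"
  assume "x \<in> topspace X \<and> (\<forall>g\<in>CI X. 0 < g x \<longrightarrow> (\<exists>s\<in>S. 0 < g s))"
  then have x: "x \<in> topspace X" and pos: "\<forall>g\<in>CI X. 0 < g x \<longrightarrow> (\<exists>s\<in>S. 0 < g s)"
    by auto
  have "\<exists>y\<in>Phi X ` S. y \<in> T" if T: "Phi X x \<in> T" "openin (tauX X) T" for T
  proof -
    obtain T' where T': "openin ?P T'" "T = T' \<inter> Phi X ` topspace X"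
      using T(2) unfolding tauX_def openin_subtopology by blast
    have "cozero_nbhd X x {u \<in> topspace X. Phi X u \<in> T'}"
      using T T' x by (intro cozero_nbhd_Phi_preimage) auto
    then obtain h where h: "h \<in> CI X" "0 < h x" "\<And>u. u \<in> topspace X \<Longrightarrow> 0 < h u \<Longrightarrow> Phi X u \<in> T'"
      using cozero_nbhdE by (metis (no_types, lifting) mem_Collect_eq)
    then obtain s where "s \<in> S" "0 < h s"
      using pos by blast
    then show ?thesis
      using h(3) S T'(2) by blast
  qed
  moreover have "Phi X x \<in> topspace (tauX X)"
    using Phi_in_topspace[OF x] x by (simp add: tauX_def)
  ultimately show "x \<in> Ktheta X S"
    using x unfolding Ktheta_def in_closure_of by blast
qed

lemma snd_Ktheta_subset:
  assumes S: "S \<subseteq> topspace (prod_topology X Y)"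
  shows "snd ` Ktheta (prod_topology X Y) S \<subseteq> Ktheta Y (snd ` S)"
proof
  fix y assume "y \<in> snd ` Ktheta (prod_topology X Y) S"
  then obtain x where "(x, y) \<in> Ktheta (prod_topology X Y) S"
    by force
  then have xy: "(x, y) \<in> topspace (prod_topology X Y)"
    and pos: "\<forall>h\<in>CI (prod_topology X Y). 0 < h (x, y) \<longrightarrow> (\<exists>s\<in>S. 0 < h s)"
    unfolding Ktheta_iff[OF S] by simp_all
  have "\<exists>s\<in>snd ` S. 0 < g s" if g: "g \<in> CI Y" "0 < g y" for g
    using pos CI_compose_snd[OF g(1), of X] g(2) by fastforce
  moreover have "snd ` S \<subseteq> topspace Y"
    using S by auto
  ultimately show "y \<in> Ktheta Y (snd ` S)"
    using xy by (simp add: Ktheta_iff)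
qed

section \<open>w-compactness implies K^\<theta>-compactness\<close>

lemma deviation_set_not_adherent:
  assumes g: "continuous_map (prod_topology X Y) euclideanreal g"
    and x: "x \<in> topspace X" and y1: "y1 \<in> topspace Y" and e: "e > 0"
  obtains B where "openin Y B" "y1 \<in> B"
    "x \<notin> X closure_of (\<Union>y\<in>B \<inter> topspace Y. {u \<in> topspace X. \<bar>g (u, y) - g (u, y1)\<bar> \<in> {e<..}})"
proof -
  obtain A B where AB: "openin X A" "openin Y B" "x \<in> A" "y1 \<in> B"
    and close: "\<And>u y. u \<in> A \<Longrightarrow> y \<in> B \<Longrightarrow> \<bar>g (u, y) - g (u, y1)\<bar> < e"
    using continuous_map_prod_box[OF g x y1 e] by metis
  let ?D = "\<Union>y\<in>B \<inter> topspace Y. {u \<in> topspace X. \<bar>g (u, y) - g (u, y1)\<bar> \<in> {e<..}}"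
  have "\<not> (\<exists>u. u \<in> ?D \<and> u \<in> A)"
    using close by fastforce
  then have "x \<notin> X closure_of ?D"
    using AB(1,3) unfolding in_closure_of by blast
  then show thesis
    using that AB(2,4) by blast
qed

lemma w_compact_indexed:
  assumes wc: "w_compact X" and "I \<noteq> {}" and "\<And>i. i \<in> I \<Longrightarrow> tau_open X (P i)"
    and fip: "\<And>J. finite J \<Longrightarrow> J \<subseteq> I \<Longrightarrow> J \<noteq> {} \<Longrightarrow> (\<Inter>i\<in>J. P i) \<noteq> {}"
  obtains x where "\<And>i. i \<in> I \<Longrightarrow> x \<in> X closure_of (P i)"
proof -
  have "finite_intersection_property (P ` I)"
    unfolding finite_intersection_property_def
  proof (intro allI impI)
    fix \<G> assume \<G>: "\<G> \<subseteq> P ` I \<and> finite \<G> \<and> \<G> \<noteq> {}"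
    then obtain J where "J \<subseteq> I" "finite J" "\<G> = P ` J"
      using finite_subset_image by metis
    then show "\<Inter>\<G> \<noteq> {}"
      using fip \<G> by auto
  qed
  moreover have "P ` I \<noteq> {}"
    using assms(2) by simp
  moreover have "\<forall>Q\<in>P ` I. tau_open X Q"
    using assms(3) by blast
  ultimately have "(\<Inter>Q\<in>P ` I. X closure_of Q) \<noteq> {}"
    using wc unfolding w_compact_def by metis
  then show thesis
    using that by auto
qed

lemma w_compact_finite_subfamily:
  assumes wc: "w_compact X" and tau_open_P: "\<And>x. x \<in> topspace X \<Longrightarrow> tau_open X (P x)"
    and not_adherent: "\<And>x. x \<in> topspace X \<Longrightarrow> x \<notin> X closure_of (P x)"
  obtains J where "finite J" "J \<subseteq> topspace X" "\<And>u. u \<in> topspace X \<Longrightarrow> \<exists>x\<in>J. u \<notin> P x"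
proof (cases "topspace X = {}")
  case True
  show thesis
    by (rule that[of "{}"]) (simp_all add: True)
next
  case False
  have "\<exists>J. finite J \<and> J \<subseteq> topspace X \<and> J \<noteq> {} \<and> (\<Inter>x\<in>J. P x) = {}"
  proof (rule ccontr)
    assume "\<not> ?thesis"
    then have fip: "(\<Inter>x\<in>J. P x) \<noteq> {}" if "finite J" "J \<subseteq> topspace X" "J \<noteq> {}" for J
      using that by blast
    obtain z where z: "\<And>x. x \<in> topspace X \<Longrightarrow> z \<in> X closure_of (P x)"
      using w_compact_indexed[OF wc False tau_open_P fip] by metis
    obtain x0 where x0: "x0 \<in> topspace X"
      using False by blast
    have zt: "z \<in> topspace X"
      using z[OF x0] by (simp add: in_closure_of)
    show False
      using z[OF zt] not_adherent[OF zt] by simp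
  qed
  then obtain J where J: "finite J" "J \<subseteq> topspace X" "(\<Inter>x\<in>J. P x) = {}"
    by blast
  show thesis
  proof (rule that[OF J(1,2)])
    show "\<exists>x\<in>J. u \<notin> P x" for u
      using J(3) by blast
  qed
qed

lemma w_compact_equicontinuous:
  assumes wc: "w_compact X" and g: "continuous_map (prod_topology X Y) euclideanreal g"
    and y1: "y1 \<in> topspace Y" and e: "e > 0"
  obtains B where "openin Y B" "y1 \<in> B"
    "\<And>y u. y \<in> B \<Longrightarrow> u \<in> topspace X \<Longrightarrow> \<bar>g (u, y) - g (u, y1)\<bar> < e"
proof -
  have "\<exists>B. openin Y B \<and> y1 \<in> B \<and> (\<forall>y\<in>B. \<forall>u\<in>topspace X. \<bar>g (u, y) - g (u, y1)\<bar> < e)"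
  proof (rule ccontr)
    assume far: "\<not> ?thesis"
    define \<N> where "\<N> = {B. openin Y B \<and> y1 \<in> B}"
    define P where
      "P B = (\<Union>y\<in>B \<inter> topspace Y. {u \<in> topspace X. \<bar>g (u, y) - g (u, y1)\<bar> \<in> {e/2<..}})" for B
    have \<N>_ne: "\<N> \<noteq> {}"
      using y1 unfolding \<N>_def by (metis empty_Collect_eq openin_topspace)
    have tau_open_P: "tau_open X (P B)" for B
      unfolding P_def using g y1
      by (intro tau_open_UN tau_open_preimage continuous_map_real_abs continuous_map_diff
          continuous_map_section) auto
    have fip_P: "(\<Inter>B\<in>\<J>. P B) \<noteq> {}" if \<J>: "finite \<J>" "\<J> \<subseteq> \<N>" for \<J>
    proof -
      have "openin Y (\<Inter>(insert (topspace Y) \<J>))"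
        using \<J> by (intro openin_Inter) (auto simp: \<N>_def)
      moreover have "y1 \<in> \<Inter>(insert (topspace Y) \<J>)"
        using \<J> y1 by (auto simp: \<N>_def)
      ultimately obtain y u where yu: "y \<in> \<Inter>(insert (topspace Y) \<J>)" "u \<in> topspace X"
          "e \<le> \<bar>g (u, y) - g (u, y1)\<bar>"
        using far by (meson not_less)
      moreover have "e/2 < \<bar>g (u, y) - g (u, y1)\<bar>"
        using yu(3) e by linarith
      ultimately have "u \<in> (\<Inter>B\<in>\<J>. P B)"
        unfolding P_def by blast
      then show ?thesis
        by auto
    qed
    obtain x where x: "\<And>B. B \<in> \<N> \<Longrightarrow> x \<in> X closure_of (P B)"
      using w_compact_indexed[OF wc \<N>_ne tau_open_P fip_P] by metis
    have "x \<in> X closure_of (P (topspace Y))"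
      using x y1 by (simp add: \<N>_def)
    then have xt: "x \<in> topspace X"
      by (meson closure_of_subset_topspace subsetD)
    have "e/2 > 0"
      using e by simp
    then obtain B where "openin Y B" "y1 \<in> B" "x \<notin> X closure_of (P B)"
      unfolding P_def by (rule deviation_set_not_adherent[OF g xt y1])
    then show False
      using x by (simp add: \<N>_def)
  qed
  then show thesis
    using that by blast
qed

definition sup_deviation :: "'a topology \<Rightarrow> ('a \<times> 'b \<Rightarrow> real) \<Rightarrow> 'b \<Rightarrow> 'b \<Rightarrow> real" where
  "sup_deviation X g y0 y = (SUP u\<in>topspace X. \<bar>g (u, y) - g (u, y0)\<bar>)"

lemma sup_deviation_upper:
  assumes g: "g \<in> CI (prod_topology X Y)"
    and y: "y \<in> topspace Y" and y0: "y0 \<in> topspace Y" and u: "u \<in> topspace X"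
  shows "\<bar>g (u, y) - g (u, y0)\<bar> \<le> sup_deviation X g y0 y"
proof -
  have "\<bar>g (v, y) - g (v, y0)\<bar> \<le> 1" if "v \<in> topspace X" for v
    using CI_bounds[OF g, of "(v, y)"] CI_bounds[OF g, of "(v, y0)"] that y y0 by auto
  then have "bdd_above ((\<lambda>v. \<bar>g (v, y) - g (v, y0)\<bar>) ` topspace X)"
    by (meson bdd_aboveI2)
  then show ?thesis
    unfolding sup_deviation_def using u by (rule cSUP_upper2) simp
qed

lemma sup_deviation_least:
  "topspace X \<noteq> {} \<Longrightarrow> (\<And>u. u \<in> topspace X \<Longrightarrow> \<bar>g (u, y) - g (u, y0)\<bar> \<le> c)
   \<Longrightarrow> sup_deviation X g y0 y \<le> c"
  unfolding sup_deviation_def by (intro cSUP_least) auto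

lemma continuous_map_sup_deviation:
  assumes wc: "w_compact X" and g: "g \<in> CI (prod_topology X Y)"
    and y0: "y0 \<in> topspace Y" and X: "topspace X \<noteq> {}"
  shows "continuous_map Y euclideanreal (sup_deviation X g y0)"
proof (rule continuous_map_real_localI)
  fix y1 and \<epsilon> :: real assume y1: "y1 \<in> topspace Y" and \<epsilon>: "\<epsilon> > 0"
  obtain B where B: "openin Y B" "y1 \<in> B"
      "\<And>y u. y \<in> B \<Longrightarrow> u \<in> topspace X \<Longrightarrow> \<bar>g (u, y) - g (u, y1)\<bar> < \<epsilon>/2"
    using w_compact_equicontinuous[OF wc continuous_map_CI[OF g] y1, of "\<epsilon>/2"] \<epsilon> by auto
  have "\<bar>sup_deviation X g y0 y - sup_deviation X g y0 y1\<bar> < \<epsilon>" if y: "y \<in> B" for y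
  proof -
    have yt: "y \<in> topspace Y"
      using openin_subset[OF B(1)] y by blast
    have "sup_deviation X g y0 y \<le> sup_deviation X g y0 y1 + \<epsilon>/2"
      using B(3)[OF y] sup_deviation_upper[OF g y1 y0]
      by (intro sup_deviation_least[OF X]) (smt (verit))
    moreover have "sup_deviation X g y0 y1 \<le> sup_deviation X g y0 y + \<epsilon>/2"
      using B(3)[OF y] sup_deviation_upper[OF g yt y0]
      by (intro sup_deviation_least[OF X]) (smt (verit))
    ultimately show ?thesis
      using \<epsilon> by linarith
  qed
  then show "\<exists>U. openin Y U \<and> y1 \<in> U \<and> (\<forall>y\<in>U. \<bar>sup_deviation X g y0 y - sup_deviation X g y0 y1\<bar> < \<epsilon>)"
    using B(1,2) by blast
qed

lemma w_compact_uniform_cozero_nbhd: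
  assumes wc: "w_compact X" and g: "g \<in> CI (prod_topology X Y)"
    and y0: "y0 \<in> topspace Y" and e: "e > 0"
  shows "cozero_nbhd Y y0 {y. \<forall>u\<in>topspace X. \<bar>g (u, y) - g (u, y0)\<bar> < e}"
proof (cases "topspace X = {}")
  case True
  show ?thesis
    using True by (intro cozero_nbhdI[of "\<lambda>_. 1"] CI_const) auto
next
  case False
  have "sup_deviation X g y0 y0 < e"
    using sup_deviation_least[OF False, of g y0 y0 0] e by simp
  then have "cozero_nbhd Y y0 {y \<in> topspace Y. sup_deviation X g y0 y \<in> {..<e}}"
    using continuous_map_sup_deviation[OF wc g y0 False] by (intro cozero_nbhd_preimage) auto
  then show ?thesis
    by (rule cozero_nbhd_mono) (use sup_deviation_upper[OF g _ y0] in force)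
qed

lemma w_compact_finite_uniform_cozero:
  assumes wc: "w_compact X" and J: "finite J"
    and G: "\<And>x. x \<in> J \<Longrightarrow> G x \<in> CI (prod_topology X Y)" "\<And>x. x \<in> J \<Longrightarrow> 0 < e x"
    and y: "y \<in> topspace Y"
  obtains h where "h \<in> CI Y" "0 < h y"
    "\<forall>y'\<in>topspace Y. 0 < h y' \<longrightarrow> (\<forall>x\<in>J. \<forall>u\<in>topspace X. \<bar>G x (u, y') - G x (u, y)\<bar> < e x)"
proof -
  define N where "N = (\<Inter>x\<in>J. {y'. \<forall>u\<in>topspace X. \<bar>G x (u, y') - G x (u, y)\<bar> < e x})"
  have "cozero_nbhd Y y N"
    unfolding N_def using J G by (intro cozero_nbhd_Inter) (auto intro: w_compact_uniform_cozero_nbhd[OF wc _ y])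
  then obtain h where "h \<in> CI Y" "0 < h y" "\<And>y'. y' \<in> topspace Y \<Longrightarrow> 0 < h y' \<Longrightarrow> y' \<in> N"
    using cozero_nbhdE by metis
  then show thesis
    using that unfolding N_def by blast
qed

lemma w_compact_Ktheta_snd_subset:
  assumes wc: "w_compact X" and S: "S \<subseteq> topspace (prod_topology X Y)"
  shows "Ktheta Y (snd ` S) \<subseteq> snd ` Ktheta (prod_topology X Y) S"
proof (rule subsetI, rule ccontr)
  fix y assume y: "y \<in> Ktheta Y (snd ` S)" and "y \<notin> snd ` Ktheta (prod_topology X Y) S"
  have sS: "snd ` S \<subseteq> topspace Y"
    using S by auto
  have yt: "y \<in> topspace Y" and pos: "\<And>v. v \<in> CI Y \<Longrightarrow> 0 < v y \<Longrightarrow> \<exists>s\<in>snd ` S. 0 < v s"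
    using y unfolding Ktheta_iff[OF sS] by auto
  from \<open>y \<notin> snd ` Ktheta (prod_topology X Y) S\<close>
  have "(x, y) \<notin> Ktheta (prod_topology X Y) S" for x
    by (metis image_eqI snd_conv)
  then have "\<exists>G. G \<in> CI (prod_topology X Y) \<and> 0 < G (x, y) \<and> (\<forall>s\<in>S. G s \<le> 0)"
    if "x \<in> topspace X" for x
    using that yt unfolding Ktheta_iff[OF S] by (auto simp: not_less)
  then obtain G where G: "\<And>x. x \<in> topspace X \<Longrightarrow> G x \<in> CI (prod_topology X Y)"
      "\<And>x. x \<in> topspace X \<Longrightarrow> 0 < G x (x, y)" "\<And>x s. x \<in> topspace X \<Longrightarrow> s \<in> S \<Longrightarrow> G x s \<le> 0"
    by metis
  define P where "P x = {u \<in> topspace X. G x (u, y) < G x (x, y) / 2}" for x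
  have cont: "continuous_map X euclideanreal (\<lambda>u. G x (u, y))" if "x \<in> topspace X" for x
    using G(1)[OF that] yt by (intro continuous_map_section continuous_map_CI)
  have "tau_open X (P x)" if "x \<in> topspace X" for x
    using tau_open_preimage[OF cont[OF that], of "{..<G x (x, y) / 2}"] by (simp add: P_def)
  moreover have "x \<notin> X closure_of (P x)" if "x \<in> topspace X" for x
    using notin_closure_of_sublevel[OF cont[OF that], of "G x (x, y) / 2"] G(2)[OF that]
    unfolding P_def by simp
  ultimately obtain J where J: "finite J" "J \<subseteq> topspace X"
      "\<And>u. u \<in> topspace X \<Longrightarrow> \<exists>x\<in>J. u \<notin> P x"
    using w_compact_finite_subfamily[OF wc] by metis
  have "G x \<in> CI (prod_topology X Y)" "0 < G x (x, y) / 2" if "x \<in> J" for x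
    using that J(2) G(1,2) by auto
  then obtain h where h: "h \<in> CI Y" "0 < h y" and close:
      "\<forall>y'\<in>topspace Y. 0 < h y' \<longrightarrow> (\<forall>x\<in>J. \<forall>u\<in>topspace X. \<bar>G x (u, y') - G x (u, y)\<bar> < G x (x, y) / 2)"
    by (rule w_compact_finite_uniform_cozero[OF wc J(1) _ _ yt])
  obtain u y' where uy': "(u, y') \<in> S" "0 < h y'"
    using pos[OF h(1,2)] by auto
  have ut: "u \<in> topspace X" and y't: "y' \<in> topspace Y"
    using uy'(1) S by auto
  obtain x where x: "x \<in> J" "u \<notin> P x"
    using J(3)[OF ut] by blast
  have xt: "x \<in> topspace X"
    using x(1) J(2) by blast
  have "G x (x, y) / 2 \<le> G x (u, y)"
    using x(2) ut by (simp add: P_def)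
  moreover have "\<bar>G x (u, y') - G x (u, y)\<bar> < G x (x, y) / 2"
    using close y't uy'(2) x(1) ut by blast
  moreover have "G x (u, y') \<le> 0"
    using G(3)[OF xt uy'(1)] .
  ultimately show False
    by linarith
qed

lemma w_compact_imp_Ktheta_compact:
  assumes "w_compact X"
  shows "Ktheta_compact X TYPE('b)"
  unfolding Ktheta_compact_def
  using snd_Ktheta_subset w_compact_Ktheta_snd_subset[OF assms] by (intro allI impI equalityI)

section \<open>The test space for K^\<theta>-compactness\<close>

text \<open>
  A point Some M of the test space stands for the pair (\<Inter>M, \<Union>M), in practice M = {Z, C}
  with Z \<subseteq> C; pairs are encoded as sets of sets because the statement fixes the type of test
  points to \<^typ>\<open>'a set set option\<close>.
\<close>

definition CI_separated :: "'a topology \<Rightarrow> 'a set set \<Rightarrow> bool" where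
  "CI_separated X M \<longleftrightarrow>
     (\<exists>f\<in>CI X. (\<forall>z\<in>topspace X \<inter> \<Inter>M. f z = 0) \<and> (\<forall>u\<in>topspace X - \<Union>M. f u = 1))"

definition separating_fun :: "'a topology \<Rightarrow> 'a set set \<Rightarrow> 'a \<Rightarrow> real" where
  "separating_fun X M =
     (SOME f. f \<in> CI X \<and> (\<forall>z\<in>topspace X \<inter> \<Inter>M. f z = 0) \<and> (\<forall>u\<in>topspace X - \<Union>M. f u = 1))"

lemma separating_fun:
  assumes "CI_separated X M"
  shows "separating_fun X M \<in> CI X"
    and "\<And>z. z \<in> topspace X \<Longrightarrow> z \<in> \<Inter>M \<Longrightarrow> separating_fun X M z = 0"
    and "\<And>u. u \<in> topspace X \<Longrightarrow> u \<notin> \<Union>M \<Longrightarrow> separating_fun X M u = 1"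
proof -
  have "separating_fun X M \<in> CI X \<and> (\<forall>z\<in>topspace X \<inter> \<Inter>M. separating_fun X M z = 0)
      \<and> (\<forall>u\<in>topspace X - \<Union>M. separating_fun X M u = 1)"
    using assms unfolding CI_separated_def separating_fun_def by (rule someI2_bex) blast
  then show "separating_fun X M \<in> CI X"
    and "\<And>z. z \<in> topspace X \<Longrightarrow> z \<in> \<Inter>M \<Longrightarrow> separating_fun X M z = 0"
    and "\<And>u. u \<in> topspace X \<Longrightarrow> u \<notin> \<Union>M \<Longrightarrow> separating_fun X M u = 1"
    by auto
qed

lemma CI_separated_level_sets:
  assumes h: "h \<in> CI X" and c: "0 < c"
  shows "CI_separated X {{u \<in> topspace X. c \<le> h u}, {u \<in> topspace X. 0 < h u}}"
  unfolding CI_separated_def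
proof (intro bexI conjI ballI)
  let ?f = "\<lambda>u. 1 - min 1 (h u / c)"
  show "?f \<in> CI X"
    unfolding CI_iff
  proof (intro conjI ballI)
    show "continuous_map X euclideanreal ?f"
      using continuous_map_CI[OF h] c by (intro continuous_intros) auto
    fix u assume "u \<in> topspace X"
    then show "0 \<le> ?f u" "?f u \<le> 1"
      using CI_bounds[OF h] c by auto
  qed
  fix z assume "z \<in> topspace X \<inter> \<Inter>{{u \<in> topspace X. c \<le> h u}, {u \<in> topspace X. 0 < h u}}"
  then show "?f z = 0"
    using c by simp
next
  fix u assume "u \<in> topspace X - \<Union>{{u \<in> topspace X. c \<le> h u}, {u \<in> topspace X. 0 < h u}}"
  then have "h u = 0"
    using CI_bounds[OF h] c by force
  then show "1 - min 1 (h u / c) = 1"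
    by simp
qed

lemma cozero_nbhd_separated_pair:
  assumes "cozero_nbhd X q P" "q \<in> topspace X"
  obtains M where "CI_separated X M" "q \<in> \<Inter>M" "\<Union>M \<subseteq> P"
proof -
  obtain h where h: "h \<in> CI X" "0 < h q" "\<And>u. u \<in> topspace X \<Longrightarrow> 0 < h u \<Longrightarrow> u \<in> P"
    using cozero_nbhdE[OF assms(1)] by metis
  let ?M = "{{u \<in> topspace X. h q \<le> h u}, {u \<in> topspace X. 0 < h u}}"
  have "CI_separated X ?M"
    using h(1,2) by (rule CI_separated_level_sets)
  moreover have "q \<in> \<Inter>?M"
    using assms(2) h(2) by simp
  moreover have "\<Union>?M \<subseteq> P"
    using h(2,3) by auto
  ultimately show thesis
    using that by blast
qed

definition test_points :: "'a topology \<Rightarrow> 'a set set option set" where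
  "test_points X = insert None (Some ` Collect (CI_separated X))"

definition test_open :: "'a topology \<Rightarrow> 'a set set \<Rightarrow> 'a set set option set \<Rightarrow> bool" where
  "test_open X F U \<longleftrightarrow> U \<subseteq> test_points X \<and>
     (None \<in> U \<longrightarrow> (\<exists>G. finite G \<and> G \<subseteq> F \<and> (\<forall>M. CI_separated X M \<and> \<Union>M \<subseteq> \<Inter>G \<longrightarrow> Some M \<in> U)))"

lemma istopology_test_open: "istopology (test_open X F)"
  unfolding istopology_def
proof (intro conjI allI impI)
  fix U V assume U: "test_open X F U" and V: "test_open X F V"
  show "test_open X F (U \<inter> V)"
    unfolding test_open_def
  proof (intro conjI impI)
    show "U \<inter> V \<subseteq> test_points X"
      using U by (auto simp: test_open_def)
    assume "None \<in> U \<inter> V"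
    then obtain G H where G: "finite G" "G \<subseteq> F" "\<And>M. CI_separated X M \<Longrightarrow> \<Union>M \<subseteq> \<Inter>G \<Longrightarrow> Some M \<in> U"
      and H: "finite H" "H \<subseteq> F" "\<And>M. CI_separated X M \<Longrightarrow> \<Union>M \<subseteq> \<Inter>H \<Longrightarrow> Some M \<in> V"
      using U V unfolding test_open_def by (metis IntD1 IntD2)
    have "Some M \<in> U \<inter> V" if "CI_separated X M" "\<Union>M \<subseteq> \<Inter>(G \<union> H)" for M
      using G(3)[OF that(1)] H(3)[OF that(1)] that(2) by (simp add: Inter_Un_distrib)
    then show "\<exists>K. finite K \<and> K \<subseteq> F \<and> (\<forall>M. CI_separated X M \<and> \<Union>M \<subseteq> \<Inter>K \<longrightarrow> Some M \<in> U \<inter> V)"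
      using G(1,2) H(1,2) by (intro exI[of _ "G \<union> H"]) auto
  qed
next
  fix \<U> assume \<U>: "\<forall>U\<in>\<U>. test_open X F U"
  show "test_open X F (\<Union>\<U>)"
    unfolding test_open_def
  proof (intro conjI impI)
    show "\<Union>\<U> \<subseteq> test_points X"
      using \<U> by (auto simp: test_open_def)
    assume "None \<in> \<Union>\<U>"
    then obtain U where "U \<in> \<U>" "None \<in> U"
      by blast
    then show "\<exists>G. finite G \<and> G \<subseteq> F \<and> (\<forall>M. CI_separated X M \<and> \<Union>M \<subseteq> \<Inter>G \<longrightarrow> Some M \<in> \<Union>\<U>)"
      using \<U> unfolding test_open_def by (meson UnionI)
  qed
qed

definition test_space :: "'a topology \<Rightarrow> 'a set set \<Rightarrow> 'a set set option topology" where
  "test_space X F = topology (test_open X F)"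

lemma openin_test_space: "openin (test_space X F) = test_open X F"
  unfolding test_space_def by (rule topology_inverse'[OF istopology_test_open])

lemma topspace_test_space: "topspace (test_space X F) = test_points X"
proof -
  have "test_open X F (test_points X)"
    unfolding test_open_def by (intro conjI impI exI[of _ "{}"]) (auto simp: test_points_def)
  then show ?thesis
    unfolding topspace_def openin_test_space test_open_def by blast
qed

definition test_set :: "'a topology \<Rightarrow> ('a \<times> 'a set set option) set" where
  "test_set X = {(z, Some M) | z M. CI_separated X M \<and> z \<in> topspace X \<and> z \<in> \<Inter>M}"

lemma test_set_subset: "test_set X \<subseteq> topspace (prod_topology X (test_space X F))"
  by (auto simp: test_set_def topspace_test_space test_points_def)

lemma None_in_Ktheta_snd_test_set:
  assumes F: "F \<noteq> {}" "\<forall>P\<in>F. tau_open X P" "finite_intersection_property F"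
  shows "None \<in> Ktheta (test_space X F) (snd ` test_set X)"
proof -
  have sS: "snd ` test_set X \<subseteq> topspace (test_space X F)"
    using test_set_subset by fastforce
  have "\<exists>s\<in>snd ` test_set X. 0 < v s" if v: "v \<in> CI (test_space X F)" "0 < v None" for v
  proof -
    let ?V = "{p \<in> topspace (test_space X F). v p \<in> {0<..}}"
    have "openin (test_space X F) ?V"
      by (rule openin_continuous_map_preimage[OF continuous_map_CI[OF v(1)]]) simp
    then have "test_open X F ?V"
      by (simp add: openin_test_space)
    moreover have "None \<in> ?V"
      using v(2) by (simp add: topspace_test_space test_points_def)
    ultimately obtain G where G: "finite G" "G \<subseteq> F"
        "\<And>M. CI_separated X M \<Longrightarrow> \<Union>M \<subseteq> \<Inter>G \<Longrightarrow> Some M \<in> ?V"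
      unfolding test_open_def by meson
    obtain P0 where P0: "P0 \<in> F"
      using F(1) by blast
    have "\<Inter>(insert P0 G) \<noteq> {}"
      using F(3)[unfolded finite_intersection_property_def, rule_format, of "insert P0 G"] G P0
      by simp
    then obtain q where q: "q \<in> \<Inter>(insert P0 G)"
      by blast
    have qt: "q \<in> topspace X"
      using q P0 F(2) by (auto simp: tau_open_iff)
    have "cozero_nbhd X q (\<Inter>(insert P0 G))"
      using G(1,2) P0 F(2) q by (intro cozero_nbhd_Inter) (auto simp: tau_open_iff)
    then obtain M where M: "CI_separated X M" "q \<in> \<Inter>M" "\<Union>M \<subseteq> \<Inter>(insert P0 G)"
      using cozero_nbhd_separated_pair qt by metis
    then have "0 < v (Some M)"
      using G(3) by auto
    moreover have "(q, Some M) \<in> test_set X"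
      using M qt unfolding test_set_def by auto
    ultimately show ?thesis
      by force
  qed
  moreover have "None \<in> topspace (test_space X F)"
    by (simp add: topspace_test_space test_points_def)
  ultimately show ?thesis
    by (simp add: Ktheta_iff[OF sS])
qed

definition test_fun :: "'a topology \<Rightarrow> 'a \<times> 'a set set option \<Rightarrow> real" where
  "test_fun X p = (case snd p of None \<Rightarrow> 1 | Some M \<Rightarrow> separating_fun X M (fst p))"

lemma openin_test_space_Some:
  "CI_separated X M \<Longrightarrow> openin (test_space X F) {Some M}"
  by (simp add: openin_test_space test_open_def test_points_def)

lemma openin_test_space_None:
  assumes "P \<in> F"
  shows "openin (test_space X F) (insert None (Some ` {M. CI_separated X M \<and> \<Union>M \<subseteq> P}))"
  unfolding openin_test_space test_open_def
proof (intro conjI impI)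
  show "insert None (Some ` {M. CI_separated X M \<and> \<Union>M \<subseteq> P}) \<subseteq> test_points X"
    by (auto simp: test_points_def)
  show "\<exists>G. finite G \<and> G \<subseteq> F \<and>
      (\<forall>M. CI_separated X M \<and> \<Union>M \<subseteq> \<Inter>G \<longrightarrow> Some M \<in> insert None (Some ` {M. CI_separated X M \<and> \<Union>M \<subseteq> P}))"
    using assms by (intro exI[of _ "{P}"]) auto
qed

lemma continuous_map_test_fun:
  assumes empty: "(\<Inter>P\<in>F. X closure_of P) = {}"
  shows "continuous_map (prod_topology X (test_space X F)) euclideanreal (test_fun X)"
proof (rule continuous_map_real_localI)
  fix p and e :: real
  assume p: "p \<in> topspace (prod_topology X (test_space X F))" and e: "0 < e"
  obtain u q where pq: "p = (u, q)" and u: "u \<in> topspace X" and q: "q \<in> test_points X"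
    using p by (cases p) (auto simp: topspace_test_space)
  show "\<exists>W. openin (prod_topology X (test_space X F)) W \<and> p \<in> W \<and>
      (\<forall>p'\<in>W. \<bar>test_fun X p' - test_fun X p\<bar> < e)"
  proof (cases q)
    case None
    obtain P where P: "P \<in> F" "u \<notin> X closure_of P"
      using empty u by blast
    then obtain A where A: "openin X A" "u \<in> A" "A \<inter> P = {}"
      using u unfolding in_closure_of by blast
    let ?N = "insert None (Some ` {M. CI_separated X M \<and> \<Union>M \<subseteq> P})"
    have "test_fun X (a, n) = 1" if a: "a \<in> A" and n: "n \<in> ?N" for a n
    proof (cases n)
      case (Some M)
      then have M: "CI_separated X M" "\<Union>M \<subseteq> P"
        using n by auto
      moreover have "a \<notin> \<Union>M"
        using a A(3) M(2) by blast
      ultimately show ?thesis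
        using separating_fun(3)[OF M(1)] openin_subset[OF A(1)] a Some by (auto simp: test_fun_def)
    qed (simp add: test_fun_def)
    then show ?thesis
      using A(1,2) openin_test_space_None[OF P(1)] pq None e
      by (intro exI[of _ "A \<times> ?N"]) (auto simp: openin_prod_Times_iff test_fun_def)
  next
    case (Some M)
    then have M: "CI_separated X M"
      using q by (auto simp: test_points_def)
    let ?f = "separating_fun X M"
    let ?A = "{a \<in> topspace X. ?f a \<in> {?f u - e<..<?f u + e}}"
    have "openin X ?A"
      by (rule openin_continuous_map_preimage[OF continuous_map_CI[OF separating_fun(1)[OF M]]]) simp
    moreover have "\<bar>test_fun X p' - test_fun X p\<bar> < e" if "p' \<in> ?A \<times> {Some M}" for p'
      using that pq Some by (auto simp: test_fun_def abs_less_iff)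
    ultimately show ?thesis
      using openin_test_space_Some[OF M] pq Some u e
      by (intro exI[of _ "?A \<times> {Some M}"]) (auto simp: openin_prod_Times_iff)
  qed
qed

lemma test_fun_CI:
  assumes "(\<Inter>P\<in>F. X closure_of P) = {}"
  shows "test_fun X \<in> CI (prod_topology X (test_space X F))"
  unfolding CI_iff
proof (rule conjI[OF continuous_map_test_fun[OF assms]], intro ballI)
  fix p assume p: "p \<in> topspace (prod_topology X (test_space X F))"
  then have u: "fst p \<in> topspace X" and q: "snd p \<in> test_points X"
    by (auto simp: topspace_test_space)
  show "0 \<le> test_fun X p \<and> test_fun X p \<le> 1"
  proof (cases "snd p")
    case None
    then show ?thesis
      by (simp add: test_fun_def)
  next
    case (Some M)
    then have "CI_separated X M"
      using q by (auto simp: test_points_def)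
    then show ?thesis
      using CI_bounds[OF separating_fun(1) u] Some by (simp add: test_fun_def)
  qed
qed

lemma pair_None_notin_Ktheta_test_set:
  assumes "(\<Inter>P\<in>F. X closure_of P) = {}"
  shows "(x, None) \<notin> Ktheta (prod_topology X (test_space X F)) (test_set X)"
proof
  assume "(x, None) \<in> Ktheta (prod_topology X (test_space X F)) (test_set X)"
  moreover have "0 < test_fun X (x, None)"
    by (simp add: test_fun_def)
  ultimately obtain s where s: "s \<in> test_set X" "0 < test_fun X s"
    using test_fun_CI[OF assms] unfolding Ktheta_iff[OF test_set_subset] by blast
  then obtain z M where zM: "s = (z, Some M)" "CI_separated X M" "z \<in> topspace X" "z \<in> \<Inter>M"
    unfolding test_set_def by blast
  then show False
    using s(2) separating_fun(2)[OF zM(2-4)] by (simp add: test_fun_def)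
qed

lemma Ktheta_compact_imp_w_compact:
  fixes X :: "'a topology"
  assumes "Ktheta_compact X TYPE('a set set option)"
  shows "w_compact X"
  unfolding w_compact_def
proof (intro allI impI notI)
  fix F :: "'a set set"
  assume F: "F \<noteq> {} \<and> (\<forall>P\<in>F. tau_open X P) \<and> finite_intersection_property F"
    and empty: "(\<Inter>P\<in>F. X closure_of P) = {}"
  have "snd ` Ktheta (prod_topology X (test_space X F)) (test_set X)
      = Ktheta (test_space X F) (snd ` test_set X)"
    using assms test_set_subset unfolding Ktheta_compact_def by blast
  moreover have "None \<in> Ktheta (test_space X F) (snd ` test_set X)"
    using F by (intro None_in_Ktheta_snd_test_set) auto
  ultimately have "None \<in> snd ` Ktheta (prod_topology X (test_space X F)) (test_set X)"
    by simp
  then show False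
    using pair_None_notin_Ktheta_test_set[OF empty] by force
qed

theorem theorem3p1:
  fixes X :: "'a topology"
  shows "(Ktheta_compact X TYPE('a set set option) \<longrightarrow> w_compact X)
       \<and> (w_compact X \<longrightarrow> Ktheta_compact X TYPE('b))"
  using Ktheta_compact_imp_w_compact w_compact_imp_Ktheta_compact by blast

end
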